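(* Let $X_{i,j}$, $1\le i\le K$, $1\le j\le n$, be i.i.d. random vectors in $\mathbb{R}^d$ with mean $\mu_0$, nonsingular covariance, and $\operatorname{E}\|X_{1,1}\|_2^\beta<\infty$ for some $\beta\ge4$, and let $K=O(N^{1-2/\beta})$ with $N=nK$. Let $\widehat\lambda^*=\arg\min_\lambda -\frac1N\sum_{i=1}^K\sum_{j=1}^n\log[1+\lambda^\top(X_{i,j}-\mu_0)]$. Then for any constant $C_1>0$, $$\sup_{\lambda\in\mathcal B(\widehat\lambda^*,C_1n^{-1/2})}\ \max_{1\le i\le K,\,1\le j\le n}|\lambda^\top(X_{i,j}-\mu_0)|=o_p(1)\quad\text{as }n\to\infty,$$ where $\mathcal B(\alpha,r)=\{\lambda\in\mathbb{R}^d:\|\lambda-\alpha\|_2\le r\}$.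
   Context: Data are split across $K$ machines with $n$ observations each; $X_{i,j}$ is the $j$-th observation on machine $i$. Asymptotics are as $n\to\infty$ with $K$ allowed to depend on $n$. *)

theory Defs
  imports "HOL-Probability.Probability" "HOL-Library.Landau_Symbols"
begin

text \<open>Covariance operator v \<mapsto> E[(v . (Y - mu)) (Y - mu)], i.e. the covariance matrix
  acting on v; it is nonsingular iff this linear map has trivial kernel.\<close>
definition cov_op :: "'a measure \<Rightarrow> ('a \<Rightarrow> 'b::euclidean_space) \<Rightarrow> 'b \<Rightarrow> 'b \<Rightarrow> 'b" where
  "cov_op M Y mu v = integral\<^sup>L M (\<lambda>\<omega>. (v \<bullet> (Y \<omega> - mu)) *\<^sub>R (Y \<omega> - mu))"

definition nonsingular_cov :: "'a measure \<Rightarrow> ('a \<Rightarrow> 'b::euclidean_space) \<Rightarrow> 'b \<Rightarrow> bool" where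
  "nonsingular_cov M Y mu \<longleftrightarrow> (\<forall>v. cov_op M Y mu v = 0 \<longrightarrow> v = 0)"

text \<open>Empirical-likelihood dual objective with K machines and n observations each
  (0-based indices i < K, j < n), N = n K.\<close>
definition el_dom :: "(nat \<Rightarrow> nat \<Rightarrow> 'a \<Rightarrow> 'b::euclidean_space) \<Rightarrow> 'b \<Rightarrow> nat \<Rightarrow> nat \<Rightarrow> 'a \<Rightarrow> 'b set" where
  "el_dom X mu K n \<omega> = {l. \<forall>i<K. \<forall>j<n. 1 + l \<bullet> (X i j \<omega> - mu) > 0}"

definition el_obj :: "(nat \<Rightarrow> nat \<Rightarrow> 'a \<Rightarrow> 'b::euclidean_space) \<Rightarrow> 'b \<Rightarrow> nat \<Rightarrow> nat \<Rightarrow> 'a \<Rightarrow> 'b \<Rightarrow> real" where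
  "el_obj X mu K n \<omega> l = - (1 / real (n * K)) * (\<Sum>i<K. \<Sum>j<n. ln (1 + l \<bullet> (X i j \<omega> - mu)))"

definition el_argmin :: "(nat \<Rightarrow> nat \<Rightarrow> 'a \<Rightarrow> 'b::euclidean_space) \<Rightarrow> 'b \<Rightarrow> nat \<Rightarrow> nat \<Rightarrow> 'a \<Rightarrow> 'b \<Rightarrow> bool" where
  "el_argmin X mu K n \<omega> l \<longleftrightarrow> l \<in> el_dom X mu K n \<omega> \<and>
     (\<forall>l'\<in>el_dom X mu K n \<omega>. el_obj X mu K n \<omega> l \<le> el_obj X mu K n \<omega> l')"

end

theory Submission
  imports Defs
begin

text \<open>
  Write z_ij = X_ij - mu0 and N = n K. Outside three bad events, every observation satisfies
  norm z_ij \<le> eta sqrt n, the sum of the z_ij is O(sqrt N), and the empirical second moment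
  form sum (theta . z_ij)^2 is at least c N on the unit sphere (c from the nonsingular
  covariance). Then ln (1 + t) \<le> t - t^2/3 makes the concave dual objective
  sum ln (1 + l . z_ij) negative on the sphere of radius a / sqrt N, so its maximiser lies in
  that ball, and every l within C1 / sqrt n of it has norm l \<le> (a + C1) / sqrt n and hence
  \<bar>l . z_ij\<bar> \<le> (a + C1) eta, which is small for small eta.

  The bad events are unlikely: the large-observation event by a union bound over the N
  observations and the tail of the beta-th moment, where K = O(N^(1 - 2/beta)) gives
  N = O(n^(beta/2)); the other two by Chebyshev's inequality for sums of i.i.d. centred
  variables, coordinatewise for the mean and entrywise (using the fourth moment) for the
  second moment matrix.
\<close>

lemma
  assumes Y: "Y \<in> borel_measurable M" and Z: "Z \<in> borel_measurable M"
    and same: "distr M borel Y = distr M borel Z"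
    and f: "f \<in> borel_measurable borel"
  shows integrable_comp_identical_distr:
      "integrable M (\<lambda>\<omega>. f (Y \<omega>)) \<longleftrightarrow> integrable M (\<lambda>\<omega>. (f (Z \<omega>) :: real))"
    and integral_comp_identical_distr:
      "integral\<^sup>L M (\<lambda>\<omega>. f (Y \<omega>)) = integral\<^sup>L M (\<lambda>\<omega>. (f (Z \<omega>) :: real))"
proof -
  have "integrable M (\<lambda>\<omega>. f (Y \<omega>)) \<longleftrightarrow> integrable (distr M borel Y) f"
    using Y f by (simp add: integrable_distr_eq)
  also have "\<dots> \<longleftrightarrow> integrable M (\<lambda>\<omega>. f (Z \<omega>))"
    unfolding same using Z f by (simp add: integrable_distr_eq)
  finally show "integrable M (\<lambda>\<omega>. f (Y \<omega>)) \<longleftrightarrow> integrable M (\<lambda>\<omega>. f (Z \<omega>))" .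
  have "integral\<^sup>L M (\<lambda>\<omega>. f (Y \<omega>)) = integral\<^sup>L (distr M borel Y) f"
    using Y f by (simp add: integral_distr)
  also have "\<dots> = integral\<^sup>L M (\<lambda>\<omega>. f (Z \<omega>))"
    unfolding same using Z f by (simp add: integral_distr)
  finally show "integral\<^sup>L M (\<lambda>\<omega>. f (Y \<omega>)) = integral\<^sup>L M (\<lambda>\<omega>. f (Z \<omega>))" .
qed

lemma measure_identical_distr:
  assumes Y: "Y \<in> borel_measurable M" and Z: "Z \<in> borel_measurable M"
    and same: "distr M borel Y = distr M borel Z"
    and A: "A \<in> sets borel"
  shows "measure M {\<omega>\<in>space M. Y \<omega> \<in> A} = measure M {\<omega>\<in>space M. Z \<omega> \<in> A}"
proof -
  have "measure M {\<omega>\<in>space M. Y \<omega> \<in> A} = measure (distr M borel Y) A"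
    using Y A by (simp add: measure_distr vimage_def Int_def conj_commute)
  also have "\<dots> = measure M {\<omega>\<in>space M. Z \<omega> \<in> A}"
    unfolding same using Z A by (simp add: measure_distr vimage_def Int_def conj_commute)
  finally show ?thesis .
qed

lemma (in prob_space)
  fixes Y :: "'i \<Rightarrow> 'a \<Rightarrow> 'b::topological_space" and g :: "'b \<Rightarrow> real"
  assumes meas[measurable]: "\<And>k. Y k \<in> borel_measurable M" "Y0 \<in> borel_measurable M"
    and indep: "indep_vars (\<lambda>_. borel) Y I"
    and ident: "\<And>k. k \<in> I \<Longrightarrow> distr M borel (Y k) = distr M borel Y0"
    and g[measurable]: "g \<in> borel_measurable borel"
    and square_int: "integrable M (\<lambda>\<omega>. (g (Y0 \<omega>))\<^sup>2)"
    and centered: "integral\<^sup>L M (\<lambda>\<omega>. g (Y0 \<omega>)) = 0"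
    and fin: "finite I"
  shows integrable_square_sum_indep:
      "integrable M (\<lambda>\<omega>. (\<Sum>k\<in>I. g (Y k \<omega>))\<^sup>2)"
    and integral_square_sum_indep:
      "integral\<^sup>L M (\<lambda>\<omega>. (\<Sum>k\<in>I. g (Y k \<omega>))\<^sup>2) = card I * integral\<^sup>L M (\<lambda>\<omega>. (g (Y0 \<omega>))\<^sup>2)"
proof -
  define Z where "Z k \<omega> = g (Y k \<omega>)" for k \<omega>
  have Z_meas[measurable]: "Z k \<in> borel_measurable M" for k
    unfolding Z_def by measurable
  have Z_square_int: "integrable M (\<lambda>\<omega>. (Z k \<omega>)\<^sup>2)"
    and Z_square: "integral\<^sup>L M (\<lambda>\<omega>. (Z k \<omega>)\<^sup>2) = integral\<^sup>L M (\<lambda>\<omega>. (g (Y0 \<omega>))\<^sup>2)"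
    if "k \<in> I" for k
    using integrable_comp_identical_distr[OF meas(1,2) ident[OF that], of "\<lambda>x. (g x)\<^sup>2"]
      integral_comp_identical_distr[OF meas(1,2) ident[OF that], of "\<lambda>x. (g x)\<^sup>2"] square_int
    unfolding Z_def by auto
  have Z_int: "integrable M (Z k)" if "k \<in> I" for k
    by (rule square_integrable_imp_integrable[OF Z_meas Z_square_int[OF that]])
  have Z_mean: "integral\<^sup>L M (Z k) = 0" if "k \<in> I" for k
    using integral_comp_identical_distr[OF meas(1,2) ident[OF that] g] centered
    unfolding Z_def by simp
  have Z_indep: "indep_vars (\<lambda>_. borel) Z I"
    unfolding Z_def using indep_vars_compose2[OF indep, of "\<lambda>_. g" "\<lambda>_. borel"] by simp
  have pair: "integrable M (\<lambda>\<omega>. Z k \<omega> * Z l \<omega>) \<and> integral\<^sup>L M (\<lambda>\<omega>. Z k \<omega> * Z l \<omega>) = 0"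
    if "k \<in> I" "l \<in> I" "k \<noteq> l" for k l
  proof -
    have "indep_vars (\<lambda>_. borel) Z {k, l}"
      by (rule indep_vars_subset[OF Z_indep]) (use that in auto)
    then show ?thesis
      using indep_vars_integrable[of "{k, l}" Z] indep_vars_lebesgue_integral[of "{k, l}" Z]
        that Z_int Z_mean by auto
  qed
  have prod_int: "integrable M (\<lambda>\<omega>. Z k \<omega> * Z l \<omega>)" if "k \<in> I" "l \<in> I" for k l
    using pair[OF that] Z_square_int[OF that(1)] by (cases "k = l") (auto simp: power2_eq_square)
  have cross: "integral\<^sup>L M (\<lambda>\<omega>. Z k \<omega> * Z l \<omega>) = 0" if "k \<in> I" "l \<in> I" "k \<noteq> l" for k l
    using pair[OF that] by blast
  have expand: "(\<Sum>k\<in>I. Z k \<omega>)\<^sup>2 = (\<Sum>k\<in>I. \<Sum>l\<in>I. Z k \<omega> * Z l \<omega>)" for \<omega>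
    by (simp add: power2_eq_square sum_product)
  show "integrable M (\<lambda>\<omega>. (\<Sum>k\<in>I. g (Y k \<omega>))\<^sup>2)"
    unfolding Z_def[symmetric] expand using prod_int by auto
  have "integral\<^sup>L M (\<lambda>\<omega>. (\<Sum>k\<in>I. Z k \<omega>)\<^sup>2)
      = (\<Sum>k\<in>I. \<Sum>l\<in>I. integral\<^sup>L M (\<lambda>\<omega>. Z k \<omega> * Z l \<omega>))"
    unfolding expand using prod_int by (simp add: Bochner_Integration.integral_sum)
  also have "\<dots> = (\<Sum>k\<in>I. integral\<^sup>L M (\<lambda>\<omega>. (Z k \<omega>)\<^sup>2))"
  proof (rule sum.cong[OF refl])
    fix k assume k: "k \<in> I"
    have "(\<Sum>l\<in>I - {k}. integral\<^sup>L M (\<lambda>\<omega>. Z k \<omega> * Z l \<omega>)) = 0"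
      using cross k by (intro sum.neutral) auto
    then show "(\<Sum>l\<in>I. integral\<^sup>L M (\<lambda>\<omega>. Z k \<omega> * Z l \<omega>)) = integral\<^sup>L M (\<lambda>\<omega>. (Z k \<omega>)\<^sup>2)"
      by (simp add: sum.remove[OF fin k] power2_eq_square)
  qed
  also have "\<dots> = card I * integral\<^sup>L M (\<lambda>\<omega>. (g (Y0 \<omega>))\<^sup>2)"
    using Z_square by simp
  finally show "integral\<^sup>L M (\<lambda>\<omega>. (\<Sum>k\<in>I. g (Y k \<omega>))\<^sup>2)
      = card I * integral\<^sup>L M (\<lambda>\<omega>. (g (Y0 \<omega>))\<^sup>2)"
    unfolding Z_def .
qed

lemma (in prob_space) prob_abs_sum_indep_ge_le:
  fixes Y :: "'i \<Rightarrow> 'a \<Rightarrow> 'b::topological_space" and g :: "'b \<Rightarrow> real"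
  assumes meas[measurable]: "\<And>k. Y k \<in> borel_measurable M" "Y0 \<in> borel_measurable M"
    and indep: "indep_vars (\<lambda>_. borel) Y I"
    and ident: "\<And>k. k \<in> I \<Longrightarrow> distr M borel (Y k) = distr M borel Y0"
    and g[measurable]: "g \<in> borel_measurable borel"
    and square_int: "integrable M (\<lambda>\<omega>. (g (Y0 \<omega>))\<^sup>2)"
    and centered: "integral\<^sup>L M (\<lambda>\<omega>. g (Y0 \<omega>)) = 0"
    and fin: "finite I" and t: "t > 0"
  shows "prob {\<omega>\<in>space M. t \<le> \<bar>\<Sum>k\<in>I. g (Y k \<omega>)\<bar>}
           \<le> card I * integral\<^sup>L M (\<lambda>\<omega>. (g (Y0 \<omega>))\<^sup>2) / t\<^sup>2"
proof -
  have "{\<omega>\<in>space M. t \<le> \<bar>\<Sum>k\<in>I. g (Y k \<omega>)\<bar>} = {\<omega>\<in>space M. t\<^sup>2 \<le> (\<Sum>k\<in>I. g (Y k \<omega>))\<^sup>2}"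
    using t by (auto simp: abs_le_square_iff[symmetric])
  moreover have "prob {\<omega>\<in>space M. t\<^sup>2 \<le> (\<Sum>k\<in>I. g (Y k \<omega>))\<^sup>2}
      \<le> integral\<^sup>L M (\<lambda>\<omega>. (\<Sum>k\<in>I. g (Y k \<omega>))\<^sup>2) / t\<^sup>2"
    by (rule integral_Markov_inequality_measure[OF integrable_square_sum_indep[OF assms(1-8)],
          where A="space M"]) (use t in auto)
  ultimately show ?thesis
    by (simp only: integral_square_sum_indep[OF assms(1-8)])
qed

lemma (in prob_space) prob_union_abs_sum_indep_ge_le:
  fixes Y :: "'i \<Rightarrow> 'a \<Rightarrow> 'b::topological_space" and g :: "'j \<Rightarrow> 'b \<Rightarrow> real"
  assumes meas[measurable]: "\<And>k. Y k \<in> borel_measurable M" "Y0 \<in> borel_measurable M"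
    and indep: "indep_vars (\<lambda>_. borel) Y I"
    and ident: "\<And>k. k \<in> I \<Longrightarrow> distr M borel (Y k) = distr M borel Y0"
    and g[measurable]: "\<And>q. g q \<in> borel_measurable borel"
    and square_int: "\<And>q. q \<in> J \<Longrightarrow> integrable M (\<lambda>\<omega>. (g q (Y0 \<omega>))\<^sup>2)"
    and centered: "\<And>q. q \<in> J \<Longrightarrow> integral\<^sup>L M (\<lambda>\<omega>. g q (Y0 \<omega>)) = 0"
    and fin: "finite I" "finite J" and t: "t > 0"
  shows "prob (\<Union>q\<in>J. {\<omega>\<in>space M. t \<le> \<bar>\<Sum>k\<in>I. g q (Y k \<omega>)\<bar>})
           \<le> card I * (\<Sum>q\<in>J. integral\<^sup>L M (\<lambda>\<omega>. (g q (Y0 \<omega>))\<^sup>2)) / t\<^sup>2"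
proof -
  have "prob (\<Union>q\<in>J. {\<omega>\<in>space M. t \<le> \<bar>\<Sum>k\<in>I. g q (Y k \<omega>)\<bar>})
      \<le> (\<Sum>q\<in>J. prob {\<omega>\<in>space M. t \<le> \<bar>\<Sum>k\<in>I. g q (Y k \<omega>)\<bar>})"
    by (rule measure_UNION_le) (use fin in auto)
  also have "\<dots> \<le> (\<Sum>q\<in>J. card I * integral\<^sup>L M (\<lambda>\<omega>. (g q (Y0 \<omega>))\<^sup>2) / t\<^sup>2)"
    by (intro sum_mono prob_abs_sum_indep_ge_le[OF meas indep ident g square_int centered fin(1) t])
  finally show ?thesis
    by (simp add: sum_divide_distrib[symmetric] sum_distrib_left)
qed


lemma (in prob_space) integrable_pow4_of_powr:
  fixes f :: "'a \<Rightarrow> real"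
  assumes f[measurable]: "f \<in> borel_measurable M" and nonneg: "\<And>\<omega>. f \<omega> \<ge> 0"
    and beta: "beta \<ge> 4" and int: "integrable M (\<lambda>\<omega>. f \<omega> powr beta)"
  shows "integrable M (\<lambda>\<omega>. f \<omega> ^ 4)"
proof (rule Bochner_Integration.integrable_bound[of _ "\<lambda>\<omega>. 1 + f \<omega> powr beta"])
  show "integrable M (\<lambda>\<omega>. 1 + f \<omega> powr beta)" using int by auto
  show "AE x in M. norm (f x ^ 4) \<le> norm (1 + f x powr beta)"
  proof (rule AE_I2)
    fix x
    have "f x ^ 4 \<le> 1 + f x powr beta"
    proof (cases "f x \<le> 1")
      case True
      then have "f x ^ 4 \<le> 1" using nonneg[of x] by (simp add: power_le_one)
      then show ?thesis using powr_ge_zero[of "f x" beta] by linarith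
    next
      case False
      then have "f x ^ 4 = f x powr (real 4)" by (simp add: powr_realpow)
      also have "\<dots> \<le> f x powr beta" using False beta by (intro powr_mono) auto
      finally show ?thesis by simp
    qed
    then show "norm (f x ^ 4) \<le> norm (1 + f x powr beta)" using nonneg[of x] by simp
  qed
qed simp

lemma norm_diff_pow4_le:
  fixes x m :: "'b::real_normed_vector"
  shows "norm (x - m) ^ 4 \<le> 16 * (norm x ^ 4 + norm m ^ 4)"
proof -
  have "norm (x - m) \<le> 2 * max (norm x) (norm m)"
    using norm_triangle_ineq4[of x m] by simp
  then have "norm (x - m) ^ 4 \<le> (2 * max (norm x) (norm m)) ^ 4"
    by (intro power_mono) auto
  also have "\<dots> = 16 * max (norm x) (norm m) ^ 4" by (simp add: power_mult_distrib)
  also have "max (norm x) (norm m) ^ 4 \<le> norm x ^ 4 + norm m ^ 4"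
    by (cases "norm x \<le> norm m") (auto simp: max_def)
  finally show ?thesis by simp
qed

lemma (in prob_space) integrable_norm_diff_pow4:
  fixes Y :: "'a \<Rightarrow> 'b::euclidean_space"
  assumes Y[measurable]: "Y \<in> borel_measurable M"
    and beta: "beta \<ge> 4" and int: "integrable M (\<lambda>\<omega>. norm (Y \<omega>) powr beta)"
  shows "integrable M (\<lambda>\<omega>. norm (Y \<omega> - mu) ^ 4)"
proof (rule Bochner_Integration.integrable_bound)
  show "integrable M (\<lambda>\<omega>. 16 * (norm (Y \<omega>) ^ 4 + norm mu ^ 4))"
    using integrable_pow4_of_powr[of "\<lambda>\<omega>. norm (Y \<omega>)", OF _ _ beta int] by auto
  show "AE x in M. norm (norm (Y x - mu) ^ 4) \<le> norm (16 * (norm (Y x) ^ 4 + norm mu ^ 4))"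
    using norm_diff_pow4_le[of "Y _" mu] by simp
qed simp

definition basis_quadratic_form :: "('b::euclidean_space \<Rightarrow> 'b \<Rightarrow> real) \<Rightarrow> 'b \<Rightarrow> real" where
  "basis_quadratic_form Q \<theta> = (\<Sum>b\<in>Basis. \<Sum>b'\<in>Basis. (\<theta> \<bullet> b) * (\<theta> \<bullet> b') * Q b b')"

lemma inner_square_eq_basis_quadratic_form:
  fixes \<theta> z :: "'b::euclidean_space"
  shows "(\<theta> \<bullet> z)\<^sup>2 = basis_quadratic_form (\<lambda>b b'. (z \<bullet> b) * (z \<bullet> b')) \<theta>"
proof -
  have "(\<theta> \<bullet> z)\<^sup>2 = (\<Sum>b\<in>Basis. (\<theta> \<bullet> b) * (z \<bullet> b)) * (\<Sum>b'\<in>Basis. (\<theta> \<bullet> b') * (z \<bullet> b'))"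
    unfolding power2_eq_square euclidean_inner[of \<theta> z] ..
  also have "\<dots> = (\<Sum>b\<in>Basis. \<Sum>b'\<in>Basis. ((\<theta> \<bullet> b) * (z \<bullet> b)) * ((\<theta> \<bullet> b') * (z \<bullet> b')))"
    by (rule sum_product)
  finally show ?thesis
    unfolding basis_quadratic_form_def by (simp only: mult_ac)
qed

definition cov_entry :: "'a measure \<Rightarrow> ('a \<Rightarrow> 'b::euclidean_space) \<Rightarrow> 'b \<Rightarrow> 'b \<Rightarrow> 'b \<Rightarrow> real" where
  "cov_entry M Y mu b b' = integral\<^sup>L M (\<lambda>\<omega>. ((Y \<omega> - mu) \<bullet> b) * ((Y \<omega> - mu) \<bullet> b'))"

context prob_space
begin

context
  fixes Y :: "'a \<Rightarrow> 'b::euclidean_space" and mu :: 'b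
  assumes Y[measurable]: "Y \<in> borel_measurable M"
    and fourth_moment: "integrable M (\<lambda>\<omega>. norm (Y \<omega> - mu) ^ 4)"
begin

lemma integrable_norm_diff_square: "integrable M (\<lambda>\<omega>. norm (Y \<omega> - mu) ^ 2)"
  by (rule square_integrable_imp_integrable) (use fourth_moment in \<open>simp_all add: power_mult[symmetric]\<close>)

lemma integrable_inner_prod:
  "integrable M (\<lambda>\<omega>. ((Y \<omega> - mu) \<bullet> u) * ((Y \<omega> - mu) \<bullet> v))"
proof (rule Bochner_Integration.integrable_bound)
  show "integrable M (\<lambda>\<omega>. norm u * norm v * norm (Y \<omega> - mu) ^ 2)"
    using integrable_norm_diff_square by auto
  show "AE x in M. norm (((Y x - mu) \<bullet> u) * ((Y x - mu) \<bullet> v)) \<le> norm (norm u * norm v * norm (Y x - mu) ^ 2)"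
  proof (rule AE_I2)
    fix x
    show "norm (((Y x - mu) \<bullet> u) * ((Y x - mu) \<bullet> v)) \<le> norm (norm u * norm v * norm (Y x - mu) ^ 2)"
      using mult_mono[OF Cauchy_Schwarz_ineq2[of "Y x - mu" u] Cauchy_Schwarz_ineq2[of "Y x - mu" v]]
      by (simp add: abs_mult power2_eq_square mult_ac)
  qed
qed simp

lemma integrable_inner_prod_square:
  "integrable M (\<lambda>\<omega>. (((Y \<omega> - mu) \<bullet> u) * ((Y \<omega> - mu) \<bullet> v))\<^sup>2)"
proof (rule Bochner_Integration.integrable_bound)
  show "integrable M (\<lambda>\<omega>. (norm u * norm v)\<^sup>2 * norm (Y \<omega> - mu) ^ 4)"
    using fourth_moment by auto
  show "AE x in M. norm ((((Y x - mu) \<bullet> u) * ((Y x - mu) \<bullet> v))\<^sup>2)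
      \<le> norm ((norm u * norm v)\<^sup>2 * norm (Y x - mu) ^ 4)"
  proof (rule AE_I2)
    fix x
    have "\<bar>((Y x - mu) \<bullet> u) * ((Y x - mu) \<bullet> v)\<bar> \<le> (norm u * norm v) * norm (Y x - mu) ^ 2"
      using mult_mono[OF Cauchy_Schwarz_ineq2[of "Y x - mu" u] Cauchy_Schwarz_ineq2[of "Y x - mu" v]]
      by (simp add: abs_mult power2_eq_square mult_ac)
    from power_mono[OF this abs_ge_zero, of 2] show "norm ((((Y x - mu) \<bullet> u) * ((Y x - mu) \<bullet> v))\<^sup>2)
        \<le> norm ((norm u * norm v)\<^sup>2 * norm (Y x - mu) ^ 4)"
      by (simp add: power_mult_distrib power_mult[symmetric])
  qed
qed simp

lemma integral_inner_square_eq_cov_form: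
  "integral\<^sup>L M (\<lambda>\<omega>. (\<theta> \<bullet> (Y \<omega> - mu))\<^sup>2) = basis_quadratic_form (cov_entry M Y mu) \<theta>"
  unfolding inner_square_eq_basis_quadratic_form basis_quadratic_form_def cov_entry_def
  by (simp add: Bochner_Integration.integral_sum integrable_inner_prod)

lemma cov_form_pos:
  assumes cov: "nonsingular_cov M Y mu" and \<theta>: "\<theta> \<noteq> 0"
  shows "basis_quadratic_form (cov_entry M Y mu) \<theta> > 0"
proof (rule ccontr)
  have "(\<theta> \<bullet> (Y \<omega> - mu))\<^sup>2 = ((Y \<omega> - mu) \<bullet> \<theta>) * ((Y \<omega> - mu) \<bullet> \<theta>)" for \<omega>
    by (simp add: power2_eq_square inner_commute)
  then have int: "integrable M (\<lambda>\<omega>. (\<theta> \<bullet> (Y \<omega> - mu))\<^sup>2)"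
    using integrable_inner_prod[of \<theta> \<theta>] by simp
  assume "\<not> ?thesis"
  moreover have "integral\<^sup>L M (\<lambda>\<omega>. (\<theta> \<bullet> (Y \<omega> - mu))\<^sup>2) \<ge> 0"
    by (intro integral_nonneg_AE) auto
  ultimately have "integral\<^sup>L M (\<lambda>\<omega>. (\<theta> \<bullet> (Y \<omega> - mu))\<^sup>2) = 0"
    by (simp add: integral_inner_square_eq_cov_form)
  then have ae: "AE \<omega> in M. (\<theta> \<bullet> (Y \<omega> - mu)) *\<^sub>R (Y \<omega> - mu) = 0"
    using integral_nonneg_eq_0_iff_AE[OF int] by auto
  have "cov_op M Y mu \<theta> = integral\<^sup>L M (\<lambda>\<omega>. 0 :: 'b)"
    unfolding cov_op_def by (rule integral_cong_AE) (use ae in auto)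
  then have "cov_op M Y mu \<theta> = 0" by simp
  then show False using cov \<theta> unfolding nonsingular_cov_def by blast
qed

lemma cov_form_lower_bound:
  assumes cov: "nonsingular_cov M Y mu"
  obtains c where "c > 0" "\<And>\<theta>. norm \<theta> = 1 \<Longrightarrow> 2 * c \<le> basis_quadratic_form (cov_entry M Y mu) \<theta>"
proof -
  let ?q = "basis_quadratic_form (cov_entry M Y mu)"
  have "continuous_on (sphere 0 1) ?q"
    unfolding basis_quadratic_form_def by (intro continuous_intros)
  moreover have "sphere (0::'b) 1 \<noteq> {}" by simp
  ultimately obtain t where t: "t \<in> sphere 0 1" "\<forall>y\<in>sphere 0 1. ?q t \<le> ?q y"
    using continuous_attains_inf[OF compact_sphere] by blast
  have "t \<noteq> 0" using t(1) by auto
  then have "?q t > 0" by (rule cov_form_pos[OF cov])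
  then show ?thesis using t(2) by (intro that[of "?q t / 2"]) auto
qed

end

end

lemma ln_one_plus_le_quadratic:
  fixes x :: real assumes "\<bar>x\<bar> \<le> 1/2"
  shows "ln (1 + x) \<le> x - x\<^sup>2 / 3"
proof -
  define h where "h y = y - y\<^sup>2 / 3 - ln (1 + y)" for y :: real
  have D: "DERIV h y :> y * (1 - 2 * y) / (3 * (1 + y))" if "\<bar>y\<bar> \<le> 1/2" for y
  proof -
    have "1 + y > 0" using that by auto
    then show ?thesis unfolding h_def
      by (auto intro!: derivative_eq_intros simp: power2_eq_square field_simps)
  qed
  have h0: "h 0 = 0" by (simp add: h_def)
  have "h x \<ge> 0"
  proof (cases "x \<ge> 0")
    case True
    have "h 0 \<le> h x"
    proof (rule DERIV_nonneg_imp_nondecreasing[of 0 x h, OF True])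
      fix y assume y: "0 \<le> y" "y \<le> x"
      then have ay: "\<bar>y\<bar> \<le> 1/2" using assms by auto
      have "y * (1 - 2 * y) / (3 * (1 + y)) \<ge> 0" using y ay by (intro divide_nonneg_nonneg mult_nonneg_nonneg) auto
      then show "\<exists>d. DERIV h y :> d \<and> d \<ge> 0" using D[OF ay] by auto
    qed
    then show ?thesis using h0 by simp
  next
    case False
    have "h x \<ge> h 0"
    proof (rule DERIV_nonpos_imp_nonincreasing[of x 0 h])
      show "x \<le> 0" using False by simp
      fix y assume y: "x \<le> y" "y \<le> 0"
      then have ay: "\<bar>y\<bar> \<le> 1/2" using assms by auto
      have "y * (1 - 2 * y) \<le> 0" using y ay by (intro mult_nonpos_nonneg) auto
      then have "y * (1 - 2 * y) / (3 * (1 + y)) \<le> 0" using ay by (intro divide_nonpos_nonneg) auto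
      then show "\<exists>d. DERIV h y :> d \<and> d \<le> 0" using D[OF ay] by auto
    qed
    then show ?thesis using h0 by simp
  qed
  then show ?thesis by (simp add: h_def)
qed

definition loglik :: "(nat \<Rightarrow> nat \<Rightarrow> 'b::euclidean_space) \<Rightarrow> nat \<Rightarrow> nat \<Rightarrow> 'b \<Rightarrow> real" where
  "loglik z K n l = (\<Sum>i<K. \<Sum>j<n. ln (1 + l \<bullet> z i j))"

definition loglik_dom :: "(nat \<Rightarrow> nat \<Rightarrow> 'b::euclidean_space) \<Rightarrow> nat \<Rightarrow> nat \<Rightarrow> 'b set" where
  "loglik_dom z K n = {l. \<forall>i<K. \<forall>j<n. 1 + l \<bullet> z i j > 0}"

lemma el_argmin_iff_loglik_argmax:
  assumes "n * K > 0"
  shows "el_argmin X mu K n \<omega> l \<longleftrightarrow> l \<in> loglik_dom (\<lambda>i j. X i j \<omega> - mu) K n \<and>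
     (\<forall>l'\<in>loglik_dom (\<lambda>i j. X i j \<omega> - mu) K n.
        loglik (\<lambda>i j. X i j \<omega> - mu) K n l' \<le> loglik (\<lambda>i j. X i j \<omega> - mu) K n l)"
proof -
  have "el_obj X mu K n \<omega> l \<le> el_obj X mu K n \<omega> l'
      \<longleftrightarrow> loglik (\<lambda>i j. X i j \<omega> - mu) K n l' \<le> loglik (\<lambda>i j. X i j \<omega> - mu) K n l" for l l'
    using assms by (simp add: el_obj_def loglik_def field_simps)
  then show ?thesis unfolding el_argmin_def el_dom_def loglik_dom_def by auto
qed

lemma loglik_zero [simp]: "loglik z K n 0 = 0"
  by (simp add: loglik_def)

lemma zero_in_loglik_dom [simp]: "0 \<in> loglik_dom z K n"
  by (simp add: loglik_dom_def)

lemma loglik_concave: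
  assumes l1: "l1 \<in> loglik_dom z K n" and l2: "l2 \<in> loglik_dom z K n" and t: "0 \<le> t" "t \<le> 1"
  shows "(1 - t) * loglik z K n l1 + t * loglik z K n l2 \<le> loglik z K n ((1 - t) *\<^sub>R l1 + t *\<^sub>R l2)"
proof -
  have comb: "1 + ((1 - t) *\<^sub>R l1 + t *\<^sub>R l2) \<bullet> z i j = (1 - t) * (1 + l1 \<bullet> z i j) + t * (1 + l2 \<bullet> z i j)"
    for i j by (simp add: inner_add_left algebra_simps)
  have pos: "1 + l1 \<bullet> z i j > 0" "1 + l2 \<bullet> z i j > 0" if "i < K" "j < n" for i j
    using l1 l2 that by (auto simp: loglik_dom_def)
  have "(1 - t) * ln (1 + l1 \<bullet> z i j) + t * ln (1 + l2 \<bullet> z i j)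
      \<le> ln (1 + ((1 - t) *\<^sub>R l1 + t *\<^sub>R l2) \<bullet> z i j)" if "i < K" "j < n" for i j
  proof -
    have "1 + l1 \<bullet> z i j \<in> {0<..}" "1 + l2 \<bullet> z i j \<in> {0<..}" using pos[OF that] by auto
    then have "(1 - t) * ln (1 + l1 \<bullet> z i j) + t * ln (1 + l2 \<bullet> z i j)
        \<le> ln ((1 - t) *\<^sub>R (1 + l1 \<bullet> z i j) + t *\<^sub>R (1 + l2 \<bullet> z i j))"
      using ln_concave t unfolding concave_on_iff by (metis diff_add_cancel diff_ge_0_iff_ge)
    then show ?thesis by (simp add: comb)
  qed
  then have "(\<Sum>i<K. \<Sum>j<n. (1 - t) * ln (1 + l1 \<bullet> z i j) + t * ln (1 + l2 \<bullet> z i j))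
      \<le> loglik z K n ((1 - t) *\<^sub>R l1 + t *\<^sub>R l2)"
    unfolding loglik_def by (intro sum_mono) auto
  then show ?thesis
    by (simp add: loglik_def sum.distrib sum_distrib_left)
qed

lemma cball_subset_loglik_dom:
  fixes z :: "nat \<Rightarrow> nat \<Rightarrow> 'b::euclidean_space"
  assumes small: "\<And>i j. i < K \<Longrightarrow> j < n \<Longrightarrow> r * norm (z i j) \<le> 1/2"
  shows "cball 0 r \<subseteq> loglik_dom z K n"
proof
  fix l :: 'b assume "l \<in> cball 0 r"
  then have l: "norm l \<le> r" by simp
  have "1 + l \<bullet> z i j > 0" if "i < K" "j < n" for i j
  proof -
    have "\<bar>l \<bullet> z i j\<bar> \<le> norm l * norm (z i j)" by (rule Cauchy_Schwarz_ineq2)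
    also have "\<dots> \<le> r * norm (z i j)" using l by (simp add: mult_right_mono)
    also have "\<dots> \<le> 1/2" using small that .
    finally show ?thesis by auto
  qed
  then show "l \<in> loglik_dom z K n" by (auto simp: loglik_dom_def)
qed

lemma loglik_nonneg_imp_norm_lt:
  assumes r: "r > 0" and neg: "\<And>l. norm l = r \<Longrightarrow> loglik z K n l < 0"
    and l: "l \<in> loglik_dom z K n" and nonneg: "0 \<le> loglik z K n l"
  shows "norm l < r"
proof (rule ccontr)
  assume "\<not> norm l < r"
  then have "r \<le> norm l" by simp
  then have "norm l > 0" using r by linarith
  define t where "t = r / norm l"
  have t: "0 < t" "t \<le> 1" "norm (t *\<^sub>R l) = r"
    using \<open>r \<le> norm l\<close> \<open>norm l > 0\<close> r by (auto simp: t_def divide_le_eq_1)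
  have "t * loglik z K n l \<le> loglik z K n (t *\<^sub>R l)"
    using loglik_concave[OF zero_in_loglik_dom l, of t] t by simp
  moreover have "0 \<le> t * loglik z K n l" using nonneg t by simp
  ultimately show False using neg[OF t(3)] by linarith
qed

lemma loglik_argmax_exists:
  fixes z :: "nat \<Rightarrow> nat \<Rightarrow> 'b::euclidean_space"
  assumes r: "r > 0"
    and small: "\<And>i j. i < K \<Longrightarrow> j < n \<Longrightarrow> r * norm (z i j) \<le> 1/2"
    and neg: "\<And>l. norm l = r \<Longrightarrow> loglik z K n l < 0"
  shows "\<exists>l\<in>loglik_dom z K n. \<forall>l'\<in>loglik_dom z K n. loglik z K n l' \<le> loglik z K n l"
proof -
  have ball_sub: "cball 0 r \<subseteq> loglik_dom z K n"
    by (rule cball_subset_loglik_dom[OF small])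
  have "continuous_on (cball 0 r) (\<lambda>l. ln (1 + l \<bullet> z i j))" if "i < K" "j < n" for i j
    using ball_sub that by (intro continuous_intros) (fastforce simp: loglik_dom_def subset_iff)
  then have "continuous_on (cball 0 r) (loglik z K n)"
    unfolding loglik_def by (intro continuous_on_sum) auto
  moreover have "cball (0::'b) r \<noteq> {}" using r by simp
  ultimately obtain m where m: "m \<in> cball 0 r" "\<forall>y\<in>cball 0 r. loglik z K n y \<le> loglik z K n m"
    using continuous_attains_sup[OF compact_cball] by blast
  have mD: "m \<in> loglik_dom z K n" using m(1) ball_sub by auto
  have "0 \<le> loglik z K n m" using m(2)[rule_format, of 0] r by simp
  then have "norm m < r" using loglik_nonneg_imp_norm_lt[of r z K n m] r neg mD by blast
  have "loglik z K n l' \<le> loglik z K n m" if l': "l' \<in> loglik_dom z K n" for l'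
  proof (rule ccontr)
    \<comment> \<open>m is interior to the ball, so a short step from m towards l' stays in it; concavity
       would then make that point better than m.\<close>
    assume gt: "\<not> loglik z K n l' \<le> loglik z K n m"
    then have "l' \<noteq> m" by auto
    define t where "t = min 1 ((r - norm m) / norm (l' - m))"
    have t: "0 < t" "t \<le> 1" using \<open>norm m < r\<close> \<open>l' \<noteq> m\<close> by (auto simp: t_def)
    have "t * norm (l' - m) \<le> r - norm m"
      using \<open>l' \<noteq> m\<close> by (simp add: t_def min_def field_simps)
    moreover have "norm ((1 - t) *\<^sub>R m + t *\<^sub>R l') = norm (m + t *\<^sub>R (l' - m))"
      by (simp add: algebra_simps)
    moreover have "norm (m + t *\<^sub>R (l' - m)) \<le> norm m + t * norm (l' - m)"
      using norm_triangle_ineq[of m "t *\<^sub>R (l' - m)"] t by simp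
    ultimately have "(1 - t) *\<^sub>R m + t *\<^sub>R l' \<in> cball 0 r" by simp
    then have "loglik z K n ((1 - t) *\<^sub>R m + t *\<^sub>R l') \<le> loglik z K n m" using m(2) by blast
    moreover have "(1 - t) * loglik z K n m + t * loglik z K n l' > loglik z K n m"
      using gt t by (simp add: algebra_simps)
    ultimately show False using loglik_concave[OF mD l', of t] t by simp
  qed
  then show ?thesis using mD by blast
qed

lemma loglik_neg_on_sphere:
  assumes r: "r > 0"
    and small: "\<And>i j. i < K \<Longrightarrow> j < n \<Longrightarrow> r * norm (z i j) \<le> 1/2"
    and mean: "norm (\<Sum>i<K. \<Sum>j<n. z i j) < r * c * N / 3"
    and quad: "\<And>\<theta>. norm \<theta> = 1 \<Longrightarrow> c * N \<le> (\<Sum>i<K. \<Sum>j<n. (\<theta> \<bullet> z i j)\<^sup>2)"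
    and l: "norm l = r"
  shows "loglik z K n l < 0"
proof -
  have "loglik z K n l \<le> (\<Sum>i<K. \<Sum>j<n. l \<bullet> z i j - (l \<bullet> z i j)\<^sup>2 / 3)"
    unfolding loglik_def
  proof (intro sum_mono)
    fix i j assume "i \<in> {..<K}" "j \<in> {..<n}"
    then have "\<bar>l \<bullet> z i j\<bar> \<le> 1/2"
      using Cauchy_Schwarz_ineq2[of l "z i j"] small l by fastforce
    then show "ln (1 + l \<bullet> z i j) \<le> l \<bullet> z i j - (l \<bullet> z i j)\<^sup>2 / 3"
      by (rule ln_one_plus_le_quadratic)
  qed
  also have "\<dots> = l \<bullet> (\<Sum>i<K. \<Sum>j<n. z i j) - (\<Sum>i<K. \<Sum>j<n. (l \<bullet> z i j)\<^sup>2) / 3"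
    by (simp add: sum_subtractf inner_sum_right sum_divide_distrib)
  also have "\<dots> < r * (r * c * N / 3) - r\<^sup>2 * (c * N) / 3"
  proof -
    have "l \<bullet> (\<Sum>i<K. \<Sum>j<n. z i j) \<le> r * norm (\<Sum>i<K. \<Sum>j<n. z i j)"
      using Cauchy_Schwarz_ineq2[of l "\<Sum>i<K. \<Sum>j<n. z i j"] l by simp
    also have "\<dots> < r * (r * c * N / 3)" by (rule mult_strict_left_mono[OF mean r])
    finally have "l \<bullet> (\<Sum>i<K. \<Sum>j<n. z i j) < r * (r * c * N / 3)" .
    moreover have "(\<Sum>i<K. \<Sum>j<n. (l \<bullet> z i j)\<^sup>2) = r\<^sup>2 * (\<Sum>i<K. \<Sum>j<n. ((l /\<^sub>R r) \<bullet> z i j)\<^sup>2)"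
    proof -
      have "(l \<bullet> z i j)\<^sup>2 = r\<^sup>2 * ((l /\<^sub>R r) \<bullet> z i j)\<^sup>2" for i j
        using r by (simp add: power_mult_distrib power_inverse)
      then show ?thesis by (simp add: sum_distrib_left)
    qed
    moreover have "r\<^sup>2 * (c * N) \<le> r\<^sup>2 * (\<Sum>i<K. \<Sum>j<n. ((l /\<^sub>R r) \<bullet> z i j)\<^sup>2)"
      using quad[of "l /\<^sub>R r"] l r by (intro mult_left_mono) simp_all
    ultimately show ?thesis by linarith
  qed
  also have "\<dots> = 0" by (simp add: power2_eq_square)
  finally show ?thesis .
qed

lemma loglik_argmax_norm_lt:
  assumes r: "r > 0"
    and small: "\<And>i j. i < K \<Longrightarrow> j < n \<Longrightarrow> r * norm (z i j) \<le> 1/2"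
    and mean: "norm (\<Sum>i<K. \<Sum>j<n. z i j) < r * c * N / 3"
    and quad: "\<And>\<theta>. norm \<theta> = 1 \<Longrightarrow> c * N \<le> (\<Sum>i<K. \<Sum>j<n. (\<theta> \<bullet> z i j)\<^sup>2)"
  shows "\<exists>l\<in>loglik_dom z K n. \<forall>l'\<in>loglik_dom z K n. loglik z K n l' \<le> loglik z K n l"
    and "l \<in> loglik_dom z K n \<Longrightarrow> \<forall>l'\<in>loglik_dom z K n. loglik z K n l' \<le> loglik z K n l
           \<Longrightarrow> norm l < r"
proof -
  note neg = loglik_neg_on_sphere[OF r small mean quad]
  show "\<exists>l\<in>loglik_dom z K n. \<forall>l'\<in>loglik_dom z K n. loglik z K n l' \<le> loglik z K n l"
    by (rule loglik_argmax_exists[OF r small neg])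
  assume "l \<in> loglik_dom z K n" "\<forall>l'\<in>loglik_dom z K n. loglik z K n l' \<le> loglik z K n l"
  then show "norm l < r"
    using loglik_nonneg_imp_norm_lt[OF r neg] by (metis loglik_zero zero_in_loglik_dom)
qed

lemma abs_basis_quadratic_form_le:
  fixes \<theta> :: "'b::euclidean_space"
  assumes \<theta>: "norm \<theta> \<le> 1" and D: "\<And>b b'. b \<in> Basis \<Longrightarrow> b' \<in> Basis \<Longrightarrow> \<bar>D b b'\<bar> \<le> t"
  shows "\<bar>basis_quadratic_form D \<theta>\<bar> \<le> (real DIM('b))\<^sup>2 * t"
proof -
  have "\<bar>(\<theta> \<bullet> b) * (\<theta> \<bullet> b') * D b b'\<bar> \<le> t" if "b \<in> Basis" "b' \<in> Basis" for b b'
  proof -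
    have "\<bar>\<theta> \<bullet> b\<bar> \<le> 1" "\<bar>\<theta> \<bullet> b'\<bar> \<le> 1"
      using Basis_le_norm[OF that(1), of \<theta>] Basis_le_norm[OF that(2), of \<theta>] \<theta>
      by (metis inner_commute order_trans)+
    then have "\<bar>\<theta> \<bullet> b\<bar> * \<bar>\<theta> \<bullet> b'\<bar> * \<bar>D b b'\<bar> \<le> 1 * 1 * t"
      using D[OF that] by (intro mult_mono) auto
    then show ?thesis by (simp add: abs_mult)
  qed
  then have "\<bar>basis_quadratic_form D \<theta>\<bar> \<le> (\<Sum>b\<in>(Basis::'b set). \<Sum>b'\<in>(Basis::'b set). t)"
    unfolding basis_quadratic_form_def
    by (intro order_trans[OF sum_abs] sum_mono order_trans[OF sum_abs]) auto
  then show ?thesis by (simp add: power2_eq_square)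
qed

lemma sum_inner_square_ge:
  fixes z :: "'k \<Rightarrow> 'b::euclidean_space" and Q :: "'b \<Rightarrow> 'b \<Rightarrow> real" and c :: real
  assumes fin: "finite I" and \<theta>: "norm \<theta> = 1"
    and Q: "2 * c \<le> basis_quadratic_form Q \<theta>"
    and dev: "\<And>b b'. b \<in> Basis \<Longrightarrow> b' \<in> Basis \<Longrightarrow>
       \<bar>(\<Sum>k\<in>I. (z k \<bullet> b) * (z k \<bullet> b')) - card I * Q b b'\<bar> \<le> c * card I / (real DIM('b))\<^sup>2"
  shows "c * card I \<le> (\<Sum>k\<in>I. (\<theta> \<bullet> z k)\<^sup>2)"
proof -
  define D where "D b b' = (\<Sum>k\<in>I. (z k \<bullet> b) * (z k \<bullet> b')) - card I * Q b b'" for b b'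
  have "(\<Sum>k\<in>I. (\<theta> \<bullet> z k)\<^sup>2) = basis_quadratic_form (\<lambda>b b'. \<Sum>k\<in>I. (z k \<bullet> b) * (z k \<bullet> b')) \<theta>"
    unfolding inner_square_eq_basis_quadratic_form basis_quadratic_form_def
    by (simp add: sum_distrib_left sum.swap[of _ I])
  also have "\<dots> = card I * basis_quadratic_form Q \<theta> + basis_quadratic_form D \<theta>"
    by (simp add: basis_quadratic_form_def D_def algebra_simps sum.distrib sum_distrib_left
        sum_subtractf)
  finally have eq: "(\<Sum>k\<in>I. (\<theta> \<bullet> z k)\<^sup>2) = card I * basis_quadratic_form Q \<theta> + basis_quadratic_form D \<theta>" .
  have "\<bar>basis_quadratic_form D \<theta>\<bar> \<le> (real DIM('b))\<^sup>2 * (c * card I / (real DIM('b))\<^sup>2)"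
    using dev \<theta> by (intro abs_basis_quadratic_form_le) (simp_all add: D_def)
  then have "\<bar>basis_quadratic_form D \<theta>\<bar> \<le> c * card I" by simp
  moreover have "card I * (2 * c) \<le> card I * basis_quadratic_form Q \<theta>"
    using Q by (intro mult_left_mono) auto
  moreover have "card I * (2 * c) = 2 * (c * card I)" by simp
  ultimately show ?thesis unfolding eq by linarith
qed

lemma (in prob_space) prob_norm_ge_le_tail_integral:
  fixes Y :: "'a \<Rightarrow> 'b::euclidean_space"
  assumes Y[measurable]: "Y \<in> borel_measurable M"
    and int: "integrable M (\<lambda>\<omega>. norm (Y \<omega>) powr beta)" and beta: "beta > 0" and s: "s > 0"
  shows "prob {\<omega>\<in>space M. s \<le> norm (Y \<omega>)}
     \<le> integral\<^sup>L M (\<lambda>\<omega>. if s \<le> norm (Y \<omega>) then norm (Y \<omega>) powr beta else 0) / s powr beta"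
proof -
  let ?u = "\<lambda>\<omega>. if s \<le> norm (Y \<omega>) then norm (Y \<omega>) powr beta else 0"
  have u: "integrable M ?u"
    by (rule Bochner_Integration.integrable_bound[OF int]) auto
  have "{\<omega>\<in>space M. s \<le> norm (Y \<omega>)} \<subseteq> {\<omega>\<in>space M. s powr beta \<le> ?u \<omega>}"
    using s beta by (auto intro!: powr_mono2)
  then have "prob {\<omega>\<in>space M. s \<le> norm (Y \<omega>)} \<le> prob {\<omega>\<in>space M. s powr beta \<le> ?u \<omega>}"
    by (intro finite_measure_mono) measurable
  also have "\<dots> \<le> integral\<^sup>L M ?u / s powr beta"
    by (rule integral_Markov_inequality_measure[OF u, where A="space M"]) (use s in auto)
  finally show ?thesis .
qed

lemma (in prob_space) tail_integral_tendsto_0: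
  fixes Y :: "'a \<Rightarrow> 'b::euclidean_space"
  assumes Y[measurable]: "Y \<in> borel_measurable M"
    and int: "integrable M (\<lambda>\<omega>. norm (Y \<omega>) powr beta)" and s: "filterlim s at_top sequentially"
  shows "(\<lambda>n. integral\<^sup>L M (\<lambda>\<omega>. if s n \<le> norm (Y \<omega>) then norm (Y \<omega>) powr beta else 0)) \<longlonglongrightarrow> 0"
proof -
  have "(\<lambda>n. integral\<^sup>L M (\<lambda>\<omega>. if s n \<le> norm (Y \<omega>) then norm (Y \<omega>) powr beta else 0))
      \<longlonglongrightarrow> integral\<^sup>L M (\<lambda>\<omega>. 0::real)"
  proof (rule integral_dominated_convergence[OF _ _ int])
    show "AE x in M. (\<lambda>n. if s n \<le> norm (Y x) then norm (Y x) powr beta else 0) \<longlonglongrightarrow> 0"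
    proof (rule AE_I2)
      fix x
      have "eventually (\<lambda>n. norm (Y x) < s n) sequentially"
        using s by (simp add: filterlim_at_top_dense)
      then show "(\<lambda>n. if s n \<le> norm (Y x) then norm (Y x) powr beta else 0) \<longlonglongrightarrow> 0"
        by (rule tendsto_eventually[OF eventually_mono]) auto
    qed
  qed auto
  then show ?thesis by simp
qed

lemma sample_size_le_of_machine_rate:
  fixes K :: "nat \<Rightarrow> nat" and beta :: real
  assumes beta: "beta > 2" and Kpos: "\<And>n. K n \<ge> 1"
    and Krate: "(\<lambda>n. real (K n)) \<in> O(\<lambda>n. real (n * K n) powr (1 - 2 / beta))"
  obtains C where "eventually (\<lambda>n. real (n * K n) \<le> C * real n powr (beta / 2)) sequentially"
proof -
  obtain c where c: "c > 0"
    and ev: "eventually (\<lambda>n. norm (real (K n)) \<le> c * norm (real (n * K n) powr (1 - 2 / beta))) sequentially"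
    using Krate by (elim landau_o.bigE) auto
  have "eventually (\<lambda>n. real (n * K n) \<le> c powr (beta / 2) * real n powr (beta / 2)) sequentially"
    using ev eventually_gt_at_top[of 0]
  proof eventually_elim
    case (elim n)
    define N where "N = real (n * K n)"
    have N: "N > 0" using elim(2) Kpos[of n] by (simp add: N_def)
    \<comment> \<open>K \<le> c N^(1 - 2/beta) means N^(2/beta) \<le> c n, i.e. N \<le> (c n)^(beta/2).\<close>
    have "N = real n * real (K n)" by (simp add: N_def)
    also have "\<dots> \<le> real n * (c * (N / N powr (2 / beta)))"
      using elim(1) N by (intro mult_left_mono) (simp_all add: N_def powr_diff)
    finally have "N powr (2 / beta) \<le> real n * c"
      using N by (simp add: field_simps)
    then have "(N powr (2 / beta)) powr (beta / 2) \<le> (real n * c) powr (beta / 2)"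
      using beta by (intro powr_mono2) auto
    then show ?case
      using beta N c by (simp add: powr_powr powr_mult mult.commute N_def)
  qed
  then show ?thesis by (rule that)
qed

lemma (in finite_measure) measurable_hull_least_measure:
  assumes S: "S \<subseteq> space M"
  shows "\<exists>A\<in>sets M. S \<subseteq> A \<and> (\<forall>B\<in>sets M. S \<subseteq> B \<longrightarrow> measure M A \<le> measure M B)"
proof -
  define F where "F = measure M ` {B\<in>sets M. S \<subseteq> B}"
  define m where "m = Inf F"
  have F: "F \<noteq> {}" "bdd_below F"
    using S unfolding F_def by (auto intro: bdd_belowI[of _ 0])
  have low: "m \<le> measure M B" if "B \<in> sets M" "S \<subseteq> B" for B
    unfolding m_def by (rule cInf_lower[OF _ F(2)]) (use that in \<open>auto simp: F_def\<close>)
  have "\<exists>B. B \<in> sets M \<and> S \<subseteq> B \<and> measure M B < m + 1 / Suc k" for k :: nat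
  proof -
    have "Inf F < m + 1 / Suc k" unfolding m_def by simp
    then obtain y where "y \<in> F" "y < m + 1 / Suc k" using cInf_lessD[OF F(1)] by blast
    then show ?thesis unfolding F_def by auto
  qed
  then obtain B where B: "\<And>k. B k \<in> sets M" "\<And>k. S \<subseteq> B k" "\<And>k. measure M (B k) < m + 1 / Suc k"
    by metis
  have "measure M (\<Inter>k. B k) \<le> m"
  proof (rule field_le_epsilon)
    fix e :: real assume "e > 0"
    then obtain k :: nat where k: "inverse (real (Suc k)) < e" using reals_Archimedean by blast
    have "measure M (\<Inter>k. B k) \<le> measure M (B k)"
      by (rule finite_measure_mono) (auto simp: B(1))
    then show "measure M (\<Inter>k. B k) \<le> m + e"
      using B(3)[of k] k by (simp add: inverse_eq_divide)
  qed
  moreover have "(\<Inter>k. B k) \<in> sets M" using B(1) by auto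
  moreover have "S \<subseteq> (\<Inter>k. B k)" using B(2) by auto
  ultimately show ?thesis using low by (meson order_trans)
qed

lemma loglik_argmax_ball_inner_le:
  fixes z :: "nat \<Rightarrow> nat \<Rightarrow> 'b::euclidean_space"
  assumes n: "n > 0" and K: "K \<ge> 1" and a: "a > 0" and rho: "rho \<ge> 0"
    and small: "a * eta \<le> 1/2"
    and bounded: "\<And>i j. i < K \<Longrightarrow> j < n \<Longrightarrow> norm (z i j) \<le> eta * sqrt n"
    and mean: "norm (\<Sum>i<K. \<Sum>j<n. z i j) < a * c * sqrt (n * K) / 3"
    and quad: "\<And>\<theta>. norm \<theta> = 1 \<Longrightarrow> c * (n * K) \<le> (\<Sum>i<K. \<Sum>j<n. (\<theta> \<bullet> z i j)\<^sup>2)"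
    and argmax: "(\<exists>l\<in>loglik_dom z K n. \<forall>l'\<in>loglik_dom z K n. loglik z K n l' \<le> loglik z K n l) \<Longrightarrow>
       lh \<in> loglik_dom z K n \<and> (\<forall>l'\<in>loglik_dom z K n. loglik z K n l' \<le> loglik z K n lh)"
    and l: "l \<in> cball lh (rho / sqrt n)" and ij: "i < K" "j < n"
  shows "\<bar>l \<bullet> z i j\<bar> \<le> (a + rho) * eta"
proof -
  \<comment> \<open>The maximiser lies within a / sqrt N of the origin, N = n K, and N \<ge> n.\<close>
  define r where "r = a / sqrt (n * K)"
  have sqrt_n: "sqrt n > 0" using n by simp
  have r: "r > 0" using a n K by (simp add: r_def)
  have "r \<le> a / sqrt n"
    unfolding r_def using a sqrt_n K by (intro divide_left_mono) auto
  have r_small: "r * norm (z i j) \<le> 1/2" if "i < K" "j < n" for i j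
  proof -
    have "r * norm (z i j) \<le> (a / sqrt n) * (eta * sqrt n)"
      using \<open>r \<le> a / sqrt n\<close> bounded[OF that] r by (intro mult_mono) auto
    also have "\<dots> = a * eta" using sqrt_n by simp
    finally show ?thesis using small by simp
  qed
  have "r * (n * K) = a * (real (n * K) / sqrt (n * K))"
    by (simp add: r_def)
  also have "\<dots> = a * sqrt (n * K)" by (subst real_div_sqrt) simp_all
  finally have r_mean: "norm (\<Sum>i<K. \<Sum>j<n. z i j) < r * c * (n * K) / 3"
    using mean by (simp add: mult_ac)
  note local = loglik_argmax_norm_lt[OF r r_small r_mean quad]
  have "norm lh < r" using argmax[OF local(1)] local(2) by blast
  have "norm l \<le> norm lh + norm (l - lh)" by (rule norm_triangle_sub)
  also have "norm (l - lh) \<le> rho / sqrt n" using l by (simp add: dist_norm norm_minus_commute)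
  finally have "norm l \<le> (a + rho) / sqrt n"
    using \<open>norm lh < r\<close> \<open>r \<le> a / sqrt n\<close> by (simp add: add_divide_distrib)
  then have "\<bar>l \<bullet> z i j\<bar> \<le> ((a + rho) / sqrt n) * (eta * sqrt n)"
    using Cauchy_Schwarz_ineq2[of l "z i j"] bounded[OF ij] a rho sqrt_n
    by (meson mult_mono norm_ge_zero order_trans)
  also have "\<dots> = (a + rho) * eta" using sqrt_n by simp
  finally show ?thesis .
qed

lemma cSUP_Max_le:
  fixes f :: "'b::real_normed_vector \<Rightarrow> nat \<Rightarrow> nat \<Rightarrow> real"
  assumes "rho \<ge> 0" "K > 0" "n > 0"
    and le: "\<And>l i j. l \<in> cball x rho \<Longrightarrow> i < K \<Longrightarrow> j < n \<Longrightarrow> f l i j \<le> e"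
  shows "(SUP l\<in>cball x rho. Max {f l i j | i j. i < K \<and> j < n}) \<le> e"
proof (rule cSUP_least)
  show "cball x rho \<noteq> {}" using assms(1) by simp
  fix l assume l: "l \<in> cball x rho"
  have eq: "{f l i j | i j. i < K \<and> j < n} = (\<lambda>(i, j). f l i j) ` ({..<K} \<times> {..<n})"
    by auto
  show "Max {f l i j | i j. i < K \<and> j < n} \<le> e"
    unfolding eq using assms(2,3) le[OF l] by (subst Max_le_iff) auto
qed

locale el_sample = prob_space M
  for M :: "'a measure" and X :: "nat \<Rightarrow> nat \<Rightarrow> 'a \<Rightarrow> 'b::euclidean_space" and mu0 :: 'b
    and beta :: real and K :: "nat \<Rightarrow> nat" +
  assumes meas[measurable]: "\<And>i j. X i j \<in> borel_measurable M"
    and indep: "indep_vars (\<lambda>_. borel) (\<lambda>(i, j). X i j) UNIV"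
    and ident: "\<And>i j. distr M borel (X i j) = distr M borel (X 0 0)"
    and mean: "integrable M (X 0 0)" "integral\<^sup>L M (X 0 0) = mu0"
    and cov: "nonsingular_cov M (X 0 0) mu0"
    and beta: "beta \<ge> 4"
    and moment: "integrable M (\<lambda>\<omega>. norm (X 0 0 \<omega>) powr beta)"
    and Kpos: "\<And>n. K n \<ge> 1"
    and Krate: "(\<lambda>n. real (K n)) \<in> O(\<lambda>n. real (n * K n) powr (1 - 2 / beta))"
begin

definition obs :: "nat \<Rightarrow> (nat \<times> nat) set" where
  "obs n = {..<K n} \<times> {..<n}"

lemma finite_obs [simp]: "finite (obs n)"
  by (simp add: obs_def)

lemma card_obs [simp]: "card (obs n) = n * K n"
  by (simp add: obs_def card_cartesian_product)

lemma sum_obs: "(\<Sum>k\<in>obs n. f (fst k) (snd k)) = (\<Sum>i<K n. \<Sum>j<n. f i j)"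
  by (simp add: obs_def sum.cartesian_product case_prod_beta)

lemma indep_obs: "indep_vars (\<lambda>_. borel) (\<lambda>k. X (fst k) (snd k)) (obs n)"
  using indep_vars_subset[OF indep, of "obs n"] by (simp add: case_prod_beta')

lemma ident_obs: "distr M borel (X (fst k) (snd k)) = distr M borel (X 0 0)"
  by (rule ident)

lemma fourth_moment: "integrable M (\<lambda>\<omega>. norm (X 0 0 \<omega> - mu0) ^ 4)"
  by (rule integrable_norm_diff_pow4[OF meas beta moment])

definition large_obs_event :: "real \<Rightarrow> nat \<Rightarrow> 'a set" where
  "large_obs_event eta n =
     (\<Union>k\<in>obs n. {\<omega>\<in>space M. eta * sqrt n < norm (X (fst k) (snd k) \<omega> - mu0)})"

definition mean_dev_event :: "real \<Rightarrow> nat \<Rightarrow> 'a set" where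
  "mean_dev_event t n =
     (\<Union>b\<in>Basis. {\<omega>\<in>space M. t \<le> \<bar>\<Sum>k\<in>obs n. (X (fst k) (snd k) \<omega> - mu0) \<bullet> b\<bar>})"

definition cov_dev :: "'b \<times> 'b \<Rightarrow> 'b \<Rightarrow> real" where
  "cov_dev q x = ((x - mu0) \<bullet> fst q) * ((x - mu0) \<bullet> snd q) - cov_entry M (X 0 0) mu0 (fst q) (snd q)"

definition cov_dev_event :: "real \<Rightarrow> nat \<Rightarrow> 'a set" where
  "cov_dev_event t n =
     (\<Union>q\<in>Basis \<times> Basis. {\<omega>\<in>space M. t \<le> \<bar>\<Sum>k\<in>obs n. cov_dev q (X (fst k) (snd k) \<omega>)\<bar>})"

lemma cov_dev_measurable [measurable]: "cov_dev q \<in> borel_measurable borel"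
  unfolding cov_dev_def by measurable

lemma sets_bad_events [measurable]:
  "large_obs_event eta n \<in> sets M" "mean_dev_event t n \<in> sets M" "cov_dev_event t n \<in> sets M"
  unfolding large_obs_event_def mean_dev_event_def cov_dev_event_def
  by (intro sets.finite_UN finite_obs finite_Basis finite_cartesian_product; measurable)+

lemma prob_large_obs_event_le:
  "prob (large_obs_event eta n) \<le> n * K n * prob {\<omega>\<in>space M. eta * sqrt n < norm (X 0 0 \<omega> - mu0)}"
proof -
  have A: "{x. eta * sqrt n < norm (x - mu0)} \<in> sets borel" by measurable
  have "prob (large_obs_event eta n)
      \<le> (\<Sum>k\<in>obs n. prob {\<omega>\<in>space M. eta * sqrt n < norm (X (fst k) (snd k) \<omega> - mu0)})"
    unfolding large_obs_event_def by (rule measure_UNION_le) auto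
  also have "\<dots> = (\<Sum>k\<in>obs n. prob {\<omega>\<in>space M. eta * sqrt n < norm (X 0 0 \<omega> - mu0)})"
    using measure_identical_distr[OF meas meas ident_obs A] by simp
  finally show ?thesis by simp
qed

lemma prob_large_obs_event_tendsto_0:
  assumes eta: "eta > 0"
  shows "(\<lambda>n. prob (large_obs_event eta n)) \<longlonglongrightarrow> 0"
proof -
  obtain C where C: "eventually (\<lambda>n. real (n * K n) \<le> C * real n powr (beta / 2)) sequentially"
    using sample_size_le_of_machine_rate[OF _ Kpos Krate] beta by force
  define s where "s n = eta / 2 * sqrt (real n)" for n
  define U where "U n = integral\<^sup>L M (\<lambda>\<omega>. if s n \<le> norm (X 0 0 \<omega>) then norm (X 0 0 \<omega>) powr beta else 0)" for n
  have s: "filterlim s at_top sequentially"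
    unfolding s_def using eta
    by (intro filterlim_tendsto_pos_mult_at_top[OF tendsto_const] filterlim_compose[OF sqrt_at_top]
        filterlim_real_sequentially) auto
  have U: "U \<longlonglongrightarrow> 0"
    unfolding U_def by (rule tail_integral_tendsto_0[OF meas moment s])
  have "eventually (\<lambda>n. norm mu0 \<le> s n \<and> n > 0) sequentially"
    using s by (simp add: filterlim_at_top eventually_conj eventually_gt_at_top)
  with C have bound: "eventually (\<lambda>n. prob (large_obs_event eta n) \<le> C * (2 / eta) powr beta * U n) sequentially"
  proof eventually_elim
    case (elim n)
    \<comment> \<open>Once s n \<ge> norm mu0, a deviation above 2 s n forces norm (X 0 0) \<ge> s n.\<close>
    have "{\<omega>\<in>space M. eta * sqrt n < norm (X 0 0 \<omega> - mu0)} \<subseteq> {\<omega>\<in>space M. s n \<le> norm (X 0 0 \<omega>)}"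
    proof safe
      fix \<omega> assume "eta * sqrt n < norm (X 0 0 \<omega> - mu0)"
      moreover have "norm (X 0 0 \<omega> - mu0) \<le> norm (X 0 0 \<omega>) + norm mu0" by (rule norm_triangle_ineq4)
      ultimately show "s n \<le> norm (X 0 0 \<omega>)" using elim(2) by (simp add: s_def)
    qed
    then have "prob {\<omega>\<in>space M. eta * sqrt n < norm (X 0 0 \<omega> - mu0)} \<le> prob {\<omega>\<in>space M. s n \<le> norm (X 0 0 \<omega>)}"
      by (rule finite_measure_mono) measurable
    also have "\<dots> \<le> U n / s n powr beta"
      unfolding U_def by (rule prob_norm_ge_le_tail_integral[OF meas moment]) (use eta beta elim in \<open>auto simp: s_def\<close>)
    finally have "real (n * K n) * prob {\<omega>\<in>space M. eta * sqrt n < norm (X 0 0 \<omega> - mu0)}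
        \<le> real (n * K n) * (U n / s n powr beta)"
      by (intro mult_left_mono) auto
    then have "prob (large_obs_event eta n) \<le> real (n * K n) * (U n / s n powr beta)"
      using prob_large_obs_event_le[of eta n] by simp
    also have "\<dots> \<le> C * real n powr (beta / 2) * (U n / s n powr beta)"
      using elim(1) by (intro mult_right_mono) (auto simp: U_def intro!: integral_nonneg_AE)
    also have "s n powr beta = (eta / 2) powr beta * real n powr (beta / 2)"
    proof -
      have "s n powr beta = (eta / 2) powr beta * sqrt n powr beta"
        unfolding s_def using eta by (simp only: powr_mult[of "eta / 2" "sqrt n"])
      also have "sqrt n powr beta = real n powr (beta / 2)"
        by (simp add: powr_half_sqrt[symmetric] powr_powr)
      finally show ?thesis .
    qed
    also have "C * real n powr (beta / 2) * (U n / ((eta / 2) powr beta * real n powr (beta / 2)))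
        = C * (2 / eta) powr beta * U n"
      using elim(2) eta by (simp add: field_simps powr_divide)
    finally show ?case .
  qed
  have "(\<lambda>n. C * (2 / eta) powr beta * U n) \<longlonglongrightarrow> 0"
    using tendsto_mult_right_zero[OF U] by simp
  then show ?thesis
    by (intro tendsto_sandwich[OF _ bound tendsto_const]) auto
qed


lemma prob_mean_dev_event_le:
  assumes r: "r > 0" and n: "n > 0"
  shows "prob (mean_dev_event (r * sqrt (n * K n)) n) \<le> integral\<^sup>L M (\<lambda>\<omega>. norm (X 0 0 \<omega> - mu0) ^ 2) / r\<^sup>2"
proof -
  have N: "real (n * K n) > 0" using n Kpos[of n] by simp
  have square_int: "integrable M (\<lambda>\<omega>. ((X 0 0 \<omega> - mu0) \<bullet> b)\<^sup>2)" for b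
    using integrable_inner_prod[OF meas fourth_moment, of b b] by (simp add: power2_eq_square)
  have centered: "integral\<^sup>L M (\<lambda>\<omega>. (X 0 0 \<omega> - mu0) \<bullet> b) = 0" for b
    using mean by (simp add: inner_diff_left prob_space)
  have "prob (mean_dev_event (r * sqrt (n * K n)) n)
      \<le> card (obs n) * (\<Sum>b\<in>Basis. integral\<^sup>L M (\<lambda>\<omega>. ((X 0 0 \<omega> - mu0) \<bullet> b)\<^sup>2)) / (r * sqrt (n * K n))\<^sup>2"
    unfolding mean_dev_event_def
    by (rule prob_union_abs_sum_indep_ge_le[where g="\<lambda>b x. (x - mu0) \<bullet> b" and Y="\<lambda>k. X (fst k) (snd k)",
          OF _ _ indep_obs ident_obs]) (use square_int centered r N in simp_all)
  also have "(\<Sum>b\<in>Basis. integral\<^sup>L M (\<lambda>\<omega>. ((X 0 0 \<omega> - mu0) \<bullet> b)\<^sup>2))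
      = integral\<^sup>L M (\<lambda>\<omega>. norm (X 0 0 \<omega> - mu0) ^ 2)"
  proof -
    have "norm x ^ 2 = (\<Sum>b\<in>Basis. (x \<bullet> b)\<^sup>2)" for x :: 'b
      unfolding power2_norm_eq_inner by (subst euclidean_inner) (simp add: power2_eq_square)
    then show ?thesis using square_int by (simp add: Bochner_Integration.integral_sum)
  qed
  also have "card (obs n) * integral\<^sup>L M (\<lambda>\<omega>. norm (X 0 0 \<omega> - mu0) ^ 2) / (r * sqrt (n * K n))\<^sup>2
      = integral\<^sup>L M (\<lambda>\<omega>. norm (X 0 0 \<omega> - mu0) ^ 2) / r\<^sup>2"
    using n Kpos[of n] r by (simp add: power_mult_distrib)
  finally show ?thesis .
qed

lemma prob_cov_dev_event_tendsto_0:
  assumes s: "s > 0"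
  shows "(\<lambda>n. prob (cov_dev_event (s * real (n * K n)) n)) \<longlonglongrightarrow> 0"
proof -
  define W where "W = (\<Sum>q\<in>Basis \<times> Basis. integral\<^sup>L M (\<lambda>\<omega>. (cov_dev q (X 0 0 \<omega>))\<^sup>2))"
  have prod_int: "integrable M (\<lambda>\<omega>. ((X 0 0 \<omega> - mu0) \<bullet> u) * ((X 0 0 \<omega> - mu0) \<bullet> v))" for u v
    by (rule integrable_inner_prod[OF meas fourth_moment])
  have square_int: "integrable M (\<lambda>\<omega>. (cov_dev q (X 0 0 \<omega>))\<^sup>2)" for q
    using integrable_inner_prod_square[OF meas fourth_moment] prod_int
    by (simp add: cov_dev_def power2_diff)
  have centered: "integral\<^sup>L M (\<lambda>\<omega>. cov_dev q (X 0 0 \<omega>)) = 0" for q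
    using prod_int by (simp add: cov_dev_def cov_entry_def prob_space)
  have bound: "prob (cov_dev_event (s * real (n * K n)) n) \<le> W / s\<^sup>2 / real n" if n: "n > 0" for n
  proof -
    have N: "real (n * K n) > 0" using n Kpos[of n] by simp
    have "prob (cov_dev_event (s * real (n * K n)) n) \<le> card (obs n) * W / (s * real (n * K n))\<^sup>2"
      unfolding cov_dev_event_def W_def
      by (rule prob_union_abs_sum_indep_ge_le[where Y="\<lambda>k. X (fst k) (snd k)", OF _ _ indep_obs ident_obs])
        (use square_int centered s N in simp_all)
    also have "\<dots> = W / s\<^sup>2 / real (n * K n)"
      using N s by (simp add: power2_eq_square)
    also have "\<dots> \<le> W / s\<^sup>2 / real n"
      using n Kpos[of n] by (intro divide_left_mono) (auto simp: W_def intro!: divide_nonneg_nonneg sum_nonneg integral_nonneg_AE)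
    finally show ?thesis .
  qed
  have "eventually (\<lambda>n. prob (cov_dev_event (s * real (n * K n)) n) \<le> W / s\<^sup>2 / real n) sequentially"
    using eventually_gt_at_top[of 0] by (rule eventually_mono) (rule bound)
  then show ?thesis
    by (intro tendsto_sandwich[OF _ _ tendsto_const lim_const_over_n[of "W / s\<^sup>2"]]) auto
qed


lemma norm_sum_lt_outside_mean_dev_event:
  assumes "\<omega> \<in> space M" "\<omega> \<notin> mean_dev_event t n"
  shows "norm (\<Sum>i<K n. \<Sum>j<n. X i j \<omega> - mu0) < real DIM('b) * t"
proof -
  have "norm (\<Sum>i<K n. \<Sum>j<n. X i j \<omega> - mu0) \<le> (\<Sum>b\<in>Basis. \<bar>(\<Sum>i<K n. \<Sum>j<n. X i j \<omega> - mu0) \<bullet> b\<bar>)"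
    by (rule norm_le_l1)
  also have "\<dots> < (\<Sum>b\<in>(Basis::'b set). t)"
  proof (rule sum_strict_mono)
    fix b :: 'b assume "b \<in> Basis"
    then show "\<bar>(\<Sum>i<K n. \<Sum>j<n. X i j \<omega> - mu0) \<bullet> b\<bar> < t"
      using assms unfolding mean_dev_event_def
      by (auto simp: inner_sum_left sum_obs[where f="\<lambda>i j. (X i j \<omega> - mu0) \<bullet> b"])
  qed auto
  finally show ?thesis by simp
qed

lemma sum_inner_square_ge_outside_cov_dev_event:
  assumes c: "2 * c \<le> basis_quadratic_form (cov_entry M (X 0 0) mu0) \<theta>" and \<theta>: "norm \<theta> = 1"
    and s: "s * (real DIM('b))\<^sup>2 \<le> c"
    and \<omega>: "\<omega> \<in> space M" "\<omega> \<notin> cov_dev_event (s * real (n * K n)) n"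
  shows "c * (n * K n) \<le> (\<Sum>i<K n. \<Sum>j<n. (\<theta> \<bullet> (X i j \<omega> - mu0))\<^sup>2)"
proof -
  have "c * card (obs n) \<le> (\<Sum>k\<in>obs n. (\<theta> \<bullet> (X (fst k) (snd k) \<omega> - mu0))\<^sup>2)"
  proof (rule sum_inner_square_ge[OF finite_obs \<theta> c])
    fix b b' :: 'b assume "b \<in> Basis" "b' \<in> Basis"
    then have "\<bar>\<Sum>k\<in>obs n. cov_dev (b, b') (X (fst k) (snd k) \<omega>)\<bar> < s * real (n * K n)"
      using \<omega> unfolding cov_dev_event_def by force
    also have "\<dots> \<le> c * card (obs n) / (real DIM('b))\<^sup>2"
    proof -
      have "s * real (n * K n) * (real DIM('b))\<^sup>2 \<le> c * real (n * K n)"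
        using mult_right_mono[OF s, of "real (n * K n)"] by (simp add: mult_ac)
      then show ?thesis by (simp add: pos_le_divide_eq)
    qed
    finally show "\<bar>(\<Sum>k\<in>obs n. ((X (fst k) (snd k) \<omega> - mu0) \<bullet> b) * ((X (fst k) (snd k) \<omega> - mu0) \<bullet> b'))
        - card (obs n) * cov_entry M (X 0 0) mu0 b b'\<bar> \<le> c * card (obs n) / (real DIM('b))\<^sup>2"
      by (simp add: cov_dev_def sum_subtractf)
  qed
  then show ?thesis by (simp add: sum_obs[where f="\<lambda>i j. (\<theta> \<bullet> (X i j \<omega> - mu0))\<^sup>2"])
qed

lemma sup_dev_le_outside_bad_events:
  fixes lamhat :: "nat \<Rightarrow> 'a \<Rightarrow> 'b"
  assumes lamhat: "\<And>n \<omega>. \<omega> \<in> space M \<Longrightarrow> (\<exists>l. el_argmin X mu0 (K n) n \<omega> l) \<Longrightarrow>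
                  el_argmin X mu0 (K n) n \<omega> (lamhat n \<omega>)"
    and n: "n > 0" and C1: "C1 > 0"
    and c: "\<And>\<theta>. norm \<theta> = 1 \<Longrightarrow> 2 * c \<le> basis_quadratic_form (cov_entry M (X 0 0) mu0) \<theta>"
    and a: "a > 0" and small: "a * eta \<le> 1/2" and close: "(a + C1) * eta \<le> e"
    and t: "real DIM('b) * t \<le> a * c * sqrt (n * K n) / 3"
    and s: "s * (real DIM('b))\<^sup>2 \<le> c"
    and \<omega>: "\<omega> \<in> space M"
      "\<omega> \<notin> large_obs_event eta n" "\<omega> \<notin> mean_dev_event t n" "\<omega> \<notin> cov_dev_event (s * real (n * K n)) n"
  shows "(SUP l\<in>cball (lamhat n \<omega>) (C1 / sqrt (real n)).
           Max {\<bar>l \<bullet> (X i j \<omega> - mu0)\<bar> | i j. i < K n \<and> j < n}) \<le> e"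
proof -
  define z where "z i j = X i j \<omega> - mu0" for i j
  have N: "n * K n > 0" using n Kpos[of n] by simp
  have bounded: "norm (z i j) \<le> eta * sqrt n" if "i < K n" "j < n" for i j
    using \<omega>(1,2) that unfolding large_obs_event_def obs_def z_def by force
  have mean: "norm (\<Sum>i<K n. \<Sum>j<n. z i j) < a * c * sqrt (n * K n) / 3"
    using norm_sum_lt_outside_mean_dev_event[OF \<omega>(1,3)] t unfolding z_def by simp
  have quad: "c * (n * K n) \<le> (\<Sum>i<K n. \<Sum>j<n. (\<theta> \<bullet> z i j)\<^sup>2)" if "norm \<theta> = 1" for \<theta>
    using sum_inner_square_ge_outside_cov_dev_event[OF c[OF that] that s \<omega>(1,4)] unfolding z_def .
  have el_argmin_iff: "el_argmin X mu0 (K n) n \<omega> l \<longleftrightarrow> l \<in> loglik_dom z (K n) n \<and>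
      (\<forall>l'\<in>loglik_dom z (K n) n. loglik z (K n) n l' \<le> loglik z (K n) n l)" for l
    unfolding z_def by (rule el_argmin_iff_loglik_argmax[OF N])
  have argmax: "lamhat n \<omega> \<in> loglik_dom z (K n) n \<and>
      (\<forall>l'\<in>loglik_dom z (K n) n. loglik z (K n) n l' \<le> loglik z (K n) n (lamhat n \<omega>))"
    if "\<exists>l\<in>loglik_dom z (K n) n. \<forall>l'\<in>loglik_dom z (K n) n. loglik z (K n) n l' \<le> loglik z (K n) n l"
  proof -
    from that have "\<exists>l. el_argmin X mu0 (K n) n \<omega> l" by (simp only: el_argmin_iff Bex_def)
    then show ?thesis by (simp only: el_argmin_iff[symmetric] lamhat[OF \<omega>(1)])
  qed
  have "\<bar>l \<bullet> z i j\<bar> \<le> (a + C1) * eta"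
    if "l \<in> cball (lamhat n \<omega>) (C1 / sqrt n)" "i < K n" "j < n" for l i j
    using loglik_argmax_ball_inner_le[OF n Kpos a less_imp_le[OF C1] small bounded mean quad argmax that] .
  then show ?thesis
    using close n Kpos[of n] C1 unfolding z_def by (intro cSUP_Max_le) force+
qed

lemma sup_dev_eventually_small:
  fixes lamhat :: "nat \<Rightarrow> 'a \<Rightarrow> 'b"
  assumes lamhat: "\<And>n \<omega>. \<omega> \<in> space M \<Longrightarrow> (\<exists>l. el_argmin X mu0 (K n) n \<omega> l) \<Longrightarrow>
                  el_argmin X mu0 (K n) n \<omega> (lamhat n \<omega>)"
    and C1: "C1 > 0" and e: "e > 0" and del: "del > 0"
  shows "\<exists>B. (\<forall>n. B n \<in> sets M) \<and>
    eventually (\<lambda>n. {\<omega> \<in> space M. (SUP l\<in>cball (lamhat n \<omega>) (C1 / sqrt (real n)).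
        Max {\<bar>l \<bullet> (X i j \<omega> - mu0)\<bar> | i j. i < K n \<and> j < n}) > e} \<subseteq> B n \<and> prob (B n) \<le> del) sequentially"
proof -
  define sup_dev where "sup_dev n \<omega> = (SUP l\<in>cball (lamhat n \<omega>) (C1 / sqrt (real n)).
        Max {\<bar>l \<bullet> (X i j \<omega> - mu0)\<bar> | i j. i < K n \<and> j < n})" for n \<omega>
  define S where "S n = {\<omega> \<in> space M. e < sup_dev n \<omega>}" for n
  obtain c where c: "c > 0" "\<And>\<theta>. norm \<theta> = 1 \<Longrightarrow> 2 * c \<le> basis_quadratic_form (cov_entry M (X 0 0) mu0) \<theta>"
    using cov_form_lower_bound[OF meas fourth_moment cov] by blast
  define V where "V = integral\<^sup>L M (\<lambda>\<omega>. norm (X 0 0 \<omega> - mu0) ^ 2)"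
  define r where "r = sqrt (3 * (V + 1) / del)"
  define a where "a = 3 * real DIM('b) * r / c"
  define eta where "eta = min e (1/2) / (a + C1)"
  define B where "B n = large_obs_event eta n \<union> mean_dev_event (r * sqrt (n * K n)) n
      \<union> cov_dev_event (c / (real DIM('b))\<^sup>2 * real (n * K n)) n" for n
  have V: "V \<ge> 0" unfolding V_def by (intro integral_nonneg_AE) auto
  have r: "r > 0" using V del by (simp add: r_def)
  have a: "a > 0" using r c by (simp add: a_def)
  have eta: "eta > 0" using e a C1 by (simp add: eta_def)
  have "(a + C1) * eta = min e (1/2)" using a C1 by (simp add: eta_def)
  then have close: "(a + C1) * eta \<le> e" and small: "a * eta \<le> 1/2"
    using C1 eta mult_right_mono[of a "a + C1" eta] by auto
  have mean_threshold: "real DIM('b) * (r * sqrt (n * K n)) \<le> a * c * sqrt (n * K n) / 3" for n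
    using c by (simp add: a_def)
  have cov_threshold: "c / (real DIM('b))\<^sup>2 * (real DIM('b))\<^sup>2 \<le> c" by simp
  have mean_small: "V / r\<^sup>2 \<le> del / 3"
    using V del by (simp add: r_def field_simps)
  have "eventually (\<lambda>n. prob (large_obs_event eta n) < del / 3
      \<and> prob (cov_dev_event (c / (real DIM('b))\<^sup>2 * real (n * K n)) n) < del / 3 \<and> n > 0) sequentially"
    using prob_large_obs_event_tendsto_0[OF eta] prob_cov_dev_event_tendsto_0[of "c / (real DIM('b))\<^sup>2"] c del
    by (intro eventually_conj order_tendstoD(2) eventually_gt_at_top) auto
  then have "eventually (\<lambda>n. S n \<subseteq> B n \<and> prob (B n) \<le> del) sequentially"
  proof eventually_elim
    case (elim n)
    have "S n \<subseteq> B n"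
    proof
      fix \<omega> assume "\<omega> \<in> S n"
      then have \<omega>: "\<omega> \<in> space M" and gt: "e < sup_dev n \<omega>" by (auto simp: S_def)
      show "\<omega> \<in> B n"
      proof (rule ccontr)
        assume "\<omega> \<notin> B n"
        have "sup_dev n \<omega> \<le> e" unfolding sup_dev_def
          by (rule sup_dev_le_outside_bad_events[OF lamhat _ C1 c(2) a small close mean_threshold cov_threshold \<omega>])
            (use elim \<open>\<omega> \<notin> B n\<close> in \<open>simp_all add: B_def\<close>)
        then show False using gt by simp
      qed
    qed
    moreover have "prob (B n) \<le> del"
    proof -
      have "prob (mean_dev_event (r * sqrt (n * K n)) n) \<le> V / r\<^sup>2"
        unfolding V_def using elim by (intro prob_mean_dev_event_le[OF r]) simp
      moreover have "prob (B n) \<le> prob (large_obs_event eta n) + prob (mean_dev_event (r * sqrt (n * K n)) n)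
          + prob (cov_dev_event (c / (real DIM('b))\<^sup>2 * real (n * K n)) n)"
        unfolding B_def by (intro order_trans[OF measure_Un_le] add_right_mono measure_Un_le) auto
      ultimately show ?thesis using elim mean_small by linarith
    qed
    ultimately show ?case by blast
  qed
  then show ?thesis unfolding S_def sup_dev_def by (intro exI[of _ B] conjI allI) (simp_all add: B_def)
qed

end

lemma (in finite_measure) measurable_cover_tendsto_0:
  assumes S: "\<And>n. S n \<subseteq> space M"
    and small: "\<And>del. del > 0 \<Longrightarrow> \<exists>B. (\<forall>n. B n \<in> sets M) \<and>
                  eventually (\<lambda>n. S n \<subseteq> B n \<and> measure M (B n) \<le> del) sequentially"
  obtains A where "\<And>n. A n \<in> sets M" "\<And>n. S n \<subseteq> A n" "(\<lambda>n. measure M (A n)) \<longlonglongrightarrow> 0"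
proof -
  \<comment> \<open>Replacing each S n by a measurable hull of least measure makes the bound uniform in del.\<close>
  have "\<forall>n. \<exists>A. A \<in> sets M \<and> S n \<subseteq> A \<and> (\<forall>B\<in>sets M. S n \<subseteq> B \<longrightarrow> measure M A \<le> measure M B)"
    using measurable_hull_least_measure[OF S] by (simp add: Bex_def)
  then obtain H where "\<forall>n. H n \<in> sets M \<and> S n \<subseteq> H n \<and>
      (\<forall>B\<in>sets M. S n \<subseteq> B \<longrightarrow> measure M (H n) \<le> measure M B)"
    using choice[of "\<lambda>n A. A \<in> sets M \<and> S n \<subseteq> A \<and> (\<forall>B\<in>sets M. S n \<subseteq> B \<longrightarrow> measure M A \<le> measure M B)"]
    by blast
  then have H: "\<And>n. H n \<in> sets M" "\<And>n. S n \<subseteq> H n"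
    "\<And>n B. B \<in> sets M \<Longrightarrow> S n \<subseteq> B \<Longrightarrow> measure M (H n) \<le> measure M B"
    by blast+
  have lim: "(\<lambda>n. measure M (H n)) \<longlonglongrightarrow> 0"
  proof (rule order_tendstoI)
    fix y :: real assume "y < 0"
    then show "eventually (\<lambda>n. y < measure M (H n)) sequentially"
      by (intro always_eventually allI) (simp add: less_le_trans[OF _ measure_nonneg])
  next
    fix y :: real assume "0 < y"
    then obtain B where B: "\<And>n. B n \<in> sets M"
      and ev: "eventually (\<lambda>n. S n \<subseteq> B n \<and> measure M (B n) \<le> y / 2) sequentially"
      using small[of "y / 2"] by auto
    from ev show "eventually (\<lambda>n. measure M (H n) < y) sequentially"
    proof eventually_elim
      case (elim n)
      then have "measure M (H n) \<le> measure M (B n)" using H(3)[OF B] by blast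
      then have "measure M (H n) \<le> y / 2" using elim by linarith
      then show ?case using \<open>0 < y\<close> by linarith
    qed
  qed
  show ?thesis by (rule that[OF H(1,2) lim])
qed

theorem lemmaA3:
  fixes M :: "'a measure" and X :: "nat \<Rightarrow> nat \<Rightarrow> 'a \<Rightarrow> 'b::euclidean_space"
    and mu0 :: 'b and beta :: real and K :: "nat \<Rightarrow> nat"
    and lamhat :: "nat \<Rightarrow> 'a \<Rightarrow> 'b" and C1 :: real
  assumes "prob_space M"
    and meas: "\<And>i j. X i j \<in> borel_measurable M"
    and indep: "prob_space.indep_vars M (\<lambda>_. borel) (\<lambda>(i, j). X i j) UNIV"
    and ident: "\<And>i j. distr M borel (X i j) = distr M borel (X 0 0)"
    and mean: "integrable M (X 0 0)" "integral\<^sup>L M (X 0 0) = mu0"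
    and cov: "nonsingular_cov M (X 0 0) mu0"
    and beta: "beta \<ge> 4"
    and moment: "integrable M (\<lambda>\<omega>. norm (X 0 0 \<omega>) powr beta)"
    and Kpos: "\<And>n. K n \<ge> 1"
    and Krate: "(\<lambda>n. real (K n)) \<in> O(\<lambda>n. real (n * K n) powr (1 - 2 / beta))"
    and lamhat: "\<And>n \<omega>. \<omega> \<in> space M \<Longrightarrow> (\<exists>l. el_argmin X mu0 (K n) n \<omega> l) \<Longrightarrow>
                  el_argmin X mu0 (K n) n \<omega> (lamhat n \<omega>)"
    and C1: "C1 > 0"
  shows "\<forall>e>0. \<exists>A. (\<forall>n. A n \<in> sets M \<and>
           {\<omega> \<in> space M. (SUP l\<in>cball (lamhat n \<omega>) (C1 / sqrt (real n)).
               Max {\<bar>l \<bullet> (X i j \<omega> - mu0)\<bar> | i j. i < K n \<and> j < n}) > e} \<subseteq> A n)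
         \<and> (\<lambda>n. measure M (A n)) \<longlonglongrightarrow> 0"
proof (intro allI impI)
  fix e :: real assume e: "e > 0"
  interpret el_sample M X mu0 beta K
    by (rule el_sample.intro[OF assms(1) el_sample_axioms.intro]) (rule assms)+
  define S where "S n = {\<omega> \<in> space M. (SUP l\<in>cball (lamhat n \<omega>) (C1 / sqrt (real n)).
       Max {\<bar>l \<bullet> (X i j \<omega> - mu0)\<bar> | i j. i < K n \<and> j < n}) > e}" for n
  obtain A where "\<And>n. A n \<in> sets M" "\<And>n. S n \<subseteq> A n" "(\<lambda>n. prob (A n)) \<longlonglongrightarrow> 0"
  proof (rule measurable_cover_tendsto_0[of S])
    fix del :: real assume "del > 0"
    from sup_dev_eventually_small[OF lamhat C1 e this]
    show "\<exists>B. (\<forall>n. B n \<in> sets M) \<and> eventually (\<lambda>n. S n \<subseteq> B n \<and> prob (B n) \<le> del) sequentially"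
      unfolding S_def .
  qed (auto simp: S_def)
  then show "\<exists>A. (\<forall>n. A n \<in> sets M \<and> {\<omega> \<in> space M. (SUP l\<in>cball (lamhat n \<omega>) (C1 / sqrt (real n)).
       Max {\<bar>l \<bullet> (X i j \<omega> - mu0)\<bar> | i j. i < K n \<and> j < n}) > e} \<subseteq> A n)
      \<and> (\<lambda>n. measure M (A n)) \<longlonglongrightarrow> 0"
    unfolding S_def by (intro exI[of _ A] conjI allI)
qed

end
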